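(* Let $\mathbb S[\boldsymbol\kappa]$ be an unstable-negative feedback that is a $P^-_{FF}$ matrix. Then $\mathbb S[\boldsymbol\kappa]$ is $D$-Hopf.
   Context: For a reaction network with reactant coefficients $s^j_m$ and stoichiometric matrix $\mathbb S$, a $k$-Child-Selection $\boldsymbol\kappa=(\kappa,E_\kappa,J)$ is a bijection $J:\kappa\to E_\kappa$ between $k$ species and $k$ reactions with $s^{J(m)}_m>0$; its CS-matrix is $\mathbb S[\boldsymbol\kappa]_{ml}=\mathbb S_{m,J(l)}$. An unstable core is a Hurwitz-unstable (some eigenvalue with positive real part) CS-matrix with no Hurwitz-unstable proper principal submatrix; a $k\times k$ unstable core with $\operatorname{sign}\det=(-1)^k$ is an unstable-negative feedback. $P^-_0$ matrix: every nonzero $j\times j$ principal minor has sign $(-1)^j$. An $n\times n$ $P^-_0$ matrix is $P^-_{FF}$ if it has a nested sequence of invertible principal submatrices $A[\kappa_1]\subset\dots\subset A[\kappa_n]$ with $|\kappa_i|=i$. Inertia: numbers of eigenvalues with negative, positive, zero real part. $A$ is $D$-Hopf if there exist an invertible principal submatrix $A[\kappa]$ and positive diagonal $D_1,D_2$ with $\operatorname{inertia}(A[\kappa]D_1)\ne\operatorname{inertia}(A[\kappa]D_2)$. *)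

theory Defs
  imports "HOL-Analysis.Analysis" "HOL-Computational_Algebra.Polynomial"
begin

text \<open>Square matrices indexed by a finite index set I are functions
  'm => 'm => 'a restricted to I x I.\<close>

definition det_on :: "'m set \<Rightarrow> ('m \<Rightarrow> 'm \<Rightarrow> 'a::comm_ring_1) \<Rightarrow> 'a" where
  "det_on I A = (\<Sum>p | p permutes I. of_int (sign p) * (\<Prod>i\<in>I. A i (p i)))"

definition charpoly_on :: "'m set \<Rightarrow> ('m \<Rightarrow> 'm \<Rightarrow> real) \<Rightarrow> complex poly" where
  "charpoly_on I A = det_on I (\<lambda>i j. (if i = j then [:0, 1:] else 0) - [:complex_of_real (A i j):])"

definition eigenvalues_on :: "'m set \<Rightarrow> ('m \<Rightarrow> 'm \<Rightarrow> real) \<Rightarrow> complex set" where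
  "eigenvalues_on I A = {z. poly (charpoly_on I A) z = 0}"

definition hurwitz_unstable_on :: "'m set \<Rightarrow> ('m \<Rightarrow> 'm \<Rightarrow> real) \<Rightarrow> bool" where
  "hurwitz_unstable_on I A \<longleftrightarrow> (\<exists>z\<in>eigenvalues_on I A. Re z > 0)"

definition inertia_on :: "'m set \<Rightarrow> ('m \<Rightarrow> 'm \<Rightarrow> real) \<Rightarrow> nat \<times> nat \<times> nat" where
  "inertia_on I A =
     ((\<Sum>z\<in>{z\<in>eigenvalues_on I A. Re z < 0}. order z (charpoly_on I A)),
      (\<Sum>z\<in>{z\<in>eigenvalues_on I A. Re z > 0}. order z (charpoly_on I A)),
      (\<Sum>z\<in>{z\<in>eigenvalues_on I A. Re z = 0}. order z (charpoly_on I A)))"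

definition reaction_network ::
  "('j \<Rightarrow> 'm \<Rightarrow> real) \<Rightarrow> ('j \<Rightarrow> 'm \<Rightarrow> real) \<Rightarrow> ('m \<Rightarrow> 'j \<Rightarrow> real) \<Rightarrow> bool" where
  "reaction_network s p S \<longleftrightarrow>
     (\<forall>j m. s j m \<ge> 0 \<and> p j m \<ge> 0) \<and> (\<forall>m j. S m j = p j m - s j m)"

definition child_selection ::
  "('j \<Rightarrow> 'm \<Rightarrow> real) \<Rightarrow> 'm set \<Rightarrow> 'j set \<Rightarrow> ('m \<Rightarrow> 'j) \<Rightarrow> bool" where
  "child_selection s K E J \<longleftrightarrow> bij_betw J K E \<and> (\<forall>m\<in>K. s (J m) m > 0)"

definition cs_matrix :: "('m \<Rightarrow> 'j \<Rightarrow> real) \<Rightarrow> ('m \<Rightarrow> 'j) \<Rightarrow> 'm \<Rightarrow> 'm \<Rightarrow> real" where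
  "cs_matrix S J = (\<lambda>m l. S m (J l))"

definition unstable_core_on :: "'m set \<Rightarrow> ('m \<Rightarrow> 'm \<Rightarrow> real) \<Rightarrow> bool" where
  "unstable_core_on K A \<longleftrightarrow> hurwitz_unstable_on K A \<and>
     (\<forall>I. I \<subset> K \<longrightarrow> \<not> hurwitz_unstable_on I A)"

definition unstable_negative_feedback_on :: "'m set \<Rightarrow> ('m \<Rightarrow> 'm \<Rightarrow> real) \<Rightarrow> bool" where
  "unstable_negative_feedback_on K A \<longleftrightarrow> unstable_core_on K A \<and>
     sgn (det_on K A) = (-1) ^ card K"

definition P0_minus_on :: "'m set \<Rightarrow> ('m \<Rightarrow> 'm \<Rightarrow> real) \<Rightarrow> bool" where
  "P0_minus_on K A \<longleftrightarrow>
     (\<forall>I\<subseteq>K. det_on I A \<noteq> 0 \<longrightarrow> sgn (det_on I A) = (-1) ^ card I)"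

definition PFF_minus_on :: "'m set \<Rightarrow> ('m \<Rightarrow> 'm \<Rightarrow> real) \<Rightarrow> bool" where
  "PFF_minus_on K A \<longleftrightarrow> P0_minus_on K A \<and>
     (\<exists>f :: nat \<Rightarrow> 'm set.
        (\<forall>i\<in>{1..card K}. f i \<subseteq> K \<and> card (f i) = i \<and> det_on (f i) A \<noteq> 0) \<and>
        (\<forall>i\<in>{1..<card K}. f i \<subset> f (Suc i)))"

definition D_Hopf_on :: "'m set \<Rightarrow> ('m \<Rightarrow> 'm \<Rightarrow> real) \<Rightarrow> bool" where
  "D_Hopf_on K A \<longleftrightarrow>
     (\<exists>I\<subseteq>K. det_on I A \<noteq> 0 \<and>
        (\<exists>d1 d2 :: 'm \<Rightarrow> real. (\<forall>i\<in>I. d1 i > 0 \<and> d2 i > 0) \<and>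
           inertia_on I (\<lambda>i j. A i j * d1 j) \<noteq> inertia_on I (\<lambda>i j. A i j * d2 j)))"

end

theory Submission
  imports Defs
begin

text \<open>Along the nested sequence of invertible principal submatrices of a \<open>P\<^sup>-\<^sub>F\<^sub>F\<close>
  matrix one builds a positive diagonal D making \<open>A D\<close> Hurwitz stable, adding one index
  at a time with a small scaling factor e: the new characteristic polynomial is
  \<open>x q(x) + e G(x)\<close> with q the stable old one, so for small e the roots stay in the
  open left half-plane, except for the root near 0, which is about \<open>-e G(0)/q(0) < 0\<close>
  because consecutive principal minors alternate in sign. An unstable-negative feedback
  A is invertible and Hurwitz-unstable, so \<open>A\<close> and \<open>A D\<close> have different inertia.\<close>

section \<open>Determinants of principal submatrices\<close>

lemma det_on_cong:
  assumes "\<And>i j. i \<in> I \<Longrightarrow> j \<in> I \<Longrightarrow> M i j = N i j"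
  shows "det_on I M = det_on I N"
  unfolding det_on_def
proof (rule sum.cong[OF refl])
  fix p assume "p \<in> {p. p permutes I}"
  then show "of_int (sign p) * (\<Prod>i\<in>I. M i (p i)) = of_int (sign p) * (\<Prod>i\<in>I. N i (p i))"
    using assms permutes_in_image by (fastforce intro!: prod.cong)
qed

lemma det_on_empty [simp]: "det_on {} M = 1"
  unfolding det_on_def by simp

lemma det_on_scale_columns:
  fixes M :: "'m \<Rightarrow> 'm \<Rightarrow> 'a::comm_ring_1"
  assumes "finite I"
  shows "det_on I (\<lambda>i j. M i j * w j) = prod w I * det_on I M"
  unfolding det_on_def sum_distrib_left
proof (rule sum.cong[OF refl])
  fix p assume "p \<in> {p. p permutes I}"
  then have "(\<Prod>i\<in>I. w (p i)) = prod w I"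
    using prod.permute[of p I w] by (simp add: o_def)
  then show "of_int (sign p) * (\<Prod>i\<in>I. M i (p i) * w (p i)) =
      prod w I * (of_int (sign p) * (\<Prod>i\<in>I. M i (p i)))"
    by (simp add: prod.distrib)
qed

lemma poly_det_on: "poly (det_on I M) x = det_on I (\<lambda>i j. poly (M i j) x)"
  unfolding det_on_def by (simp add: poly_sum poly_prod)

lemma of_real_det_on: "of_real (det_on I M) = det_on I (\<lambda>i j. of_real (M i j))"
  unfolding det_on_def by simp

lemma det_on_replace_column:
  fixes M :: "'m \<Rightarrow> 'm \<Rightarrow> 'a::comm_ring_1"
  assumes "finite I" and "k \<in> I"
  shows "det_on I (\<lambda>i j. if j = k then f i else M i j) =
    (\<Sum>p | p permutes I. of_int (sign p) * (f (inv p k) * (\<Prod>i\<in>I - {inv p k}. M i (p i))))"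
  unfolding det_on_def
proof (rule sum.cong[OF refl])
  fix p assume "p \<in> {p. p permutes I}"
  then have p: "p permutes I" by simp
  define i0 where "i0 = inv p k"
  have "i0 \<in> I"
    unfolding i0_def using assms(2) p permutes_in_image permutes_inv by metis
  have "p i0 = k"
    unfolding i0_def using permutes_inverses(1)[OF p] by simp
  have "p i \<noteq> k" if "i \<in> I - {i0}" for i
    using that \<open>p i0 = k\<close> permutes_inj[OF p] by (metis DiffD2 injD singletonI)
  then have "(\<Prod>i\<in>I. if p i = k then f i else M i (p i)) = f i0 * (\<Prod>i\<in>I - {i0}. M i (p i))"
    using \<open>i0 \<in> I\<close> \<open>p i0 = k\<close> by (auto simp: prod.remove[OF assms(1)] intro!: prod.cong)
  then show "of_int (sign p) * (\<Prod>i\<in>I. if p i = k then f i else M i (p i)) =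
      of_int (sign p) * (f (inv p k) * (\<Prod>i\<in>I - {inv p k}. M i (p i)))"
    by (simp add: i0_def)
qed

lemma det_on_add_column:
  fixes M :: "'m \<Rightarrow> 'm \<Rightarrow> 'a::comm_ring_1"
  assumes "finite I" and "k \<in> I"
  shows "det_on I (\<lambda>i j. if j = k then f i + g i else M i j) =
    det_on I (\<lambda>i j. if j = k then f i else M i j) + det_on I (\<lambda>i j. if j = k then g i else M i j)"
  unfolding det_on_replace_column[OF assms] by (simp add: algebra_simps sum.distrib)

lemma det_on_scale_column:
  fixes M :: "'m \<Rightarrow> 'm \<Rightarrow> 'a::comm_ring_1"
  assumes "finite I" and "k \<in> I"
  shows "det_on I (\<lambda>i j. if j = k then c * f i else M i j) =
    c * det_on I (\<lambda>i j. if j = k then f i else M i j)"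
  unfolding det_on_replace_column[OF assms] by (simp add: algebra_simps sum_distrib_left)

lemma permutes_fixing_eq_permutes_remove:
  "{p. p permutes I \<and> p k = k} = {p. p permutes (I - {k})}"
proof (intro set_eqI iffI)
  fix p assume "p \<in> {p. p permutes I \<and> p k = k}"
  then show "p \<in> {p. p permutes (I - {k})}"
    using permutes_superset[of p I "I - {k}"] by auto
next
  fix p assume "p \<in> {p. p permutes (I - {k})}"
  then show "p \<in> {p. p permutes I \<and> p k = k}"
    using permutes_subset[of p "I - {k}" I] permutes_not_in[of p "I - {k}" k] by auto
qed

lemma det_on_unit_column:
  fixes M :: "'m \<Rightarrow> 'm \<Rightarrow> 'a::comm_ring_1"
  assumes "finite I" and "k \<in> I"
  shows "det_on I (\<lambda>i j. if j = k then (if i = k then x else 0) else M i j) = x * det_on (I - {k}) M"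
proof -
  have inv_fix: "inv p k = k \<longleftrightarrow> p k = k" if "p permutes I" for p
    using permutes_inverses[OF that] by metis
  have inv_fixed: "inv p k = k" if "p permutes I" and "p k = k" for p
    using inv_fix that by blast
  have "det_on I (\<lambda>i j. if j = k then (if i = k then x else 0) else M i j) =
      (\<Sum>p | p permutes I. if p k = k then x * (of_int (sign p) * (\<Prod>i\<in>I - {k}. M i (p i))) else 0)"
    unfolding det_on_replace_column[OF assms] by (rule sum.cong) (auto simp: inv_fix inv_fixed)
  also have "\<dots> = (\<Sum>p | p permutes I \<and> p k = k. x * (of_int (sign p) * (\<Prod>i\<in>I - {k}. M i (p i))))"
    using finite_permutations[OF assms(1)] by (simp add: sum.inter_filter[symmetric] Collect_conj_eq)
  finally show ?thesis
    unfolding permutes_fixing_eq_permutes_remove det_on_def by (simp add: sum_distrib_left)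
qed

lemma degree_det_on_replace_column:
  fixes M :: "'m \<Rightarrow> 'm \<Rightarrow> 'a::comm_ring_1 poly"
  assumes "finite I" and "k \<in> I"
    and "\<And>i. degree (f i) = 0" and "\<And>i j. i \<in> I \<Longrightarrow> j \<in> I \<Longrightarrow> degree (M i j) \<le> 1"
  shows "degree (det_on I (\<lambda>i j. if j = k then f i else M i j)) \<le> card I - 1"
  unfolding det_on_replace_column[OF assms(1,2)]
proof (rule degree_sum_le)
  show "finite {p. p permutes I}"
    using finite_permutations[OF assms(1)] .
  fix p assume "p \<in> {p. p permutes I}"
  then have p: "p permutes I" by simp
  define i0 where "i0 = inv p k"
  have "i0 \<in> I"
    unfolding i0_def using assms(2) p permutes_in_image permutes_inv by metis
  have "degree (\<Prod>i\<in>I - {i0}. M i (p i)) \<le> (\<Sum>i\<in>I - {i0}. degree (M i (p i)))"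
    using degree_prod_sum_le[of "I - {i0}" "\<lambda>i. M i (p i)"] assms(1) by (simp add: o_def)
  also have "\<dots> \<le> (\<Sum>i\<in>I - {i0}. 1)"
    by (rule sum_mono) (use assms(4) permutes_in_image[OF p] in auto)
  also have "\<dots> = card I - 1"
    using \<open>i0 \<in> I\<close> assms(1) by simp
  finally have "degree (\<Prod>i\<in>I - {i0}. M i (p i)) \<le> card I - 1" .
  moreover have "degree (of_int (sign p) * (f i0 * (\<Prod>i\<in>I - {i0}. M i (p i)))) \<le>
      degree (of_int (sign p) :: 'a poly) + (degree (f i0) + degree (\<Prod>i\<in>I - {i0}. M i (p i)))"
    by (meson add_le_mono degree_mult_le le_trans order_refl)
  ultimately show
    "degree (of_int (sign p) * (f (inv p k) * (\<Prod>i\<in>I - {inv p k}. M i (p i)))) \<le> card I - 1"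
    using assms(3) unfolding i0_def by simp
qed

section \<open>Characteristic polynomials\<close>

definition char_matrix :: "('m \<Rightarrow> 'm \<Rightarrow> real) \<Rightarrow> 'm \<Rightarrow> 'm \<Rightarrow> complex poly" where
  "char_matrix B i j = (if i = j then [:0, 1:] else 0) - [:complex_of_real (B i j):]"

lemma charpoly_on_char_matrix: "charpoly_on I B = det_on I (char_matrix B)"
  unfolding charpoly_on_def char_matrix_def ..

lemma degree_char_matrix: "degree (char_matrix B i j) \<le> 1"
  unfolding char_matrix_def by (rule order.trans[OF degree_diff_le_max]) auto

text \<open>Column k of \<open>x I - B\<close> is \<open>x e\<^sub>k\<close> plus column k of \<open>-B\<close>.\<close>
lemma charpoly_on_split_column:
  assumes "finite I" and "k \<in> I"
  shows "charpoly_on I B = [:0, 1:] * charpoly_on (I - {k}) B +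
    det_on I (\<lambda>i j. if j = k then [:- complex_of_real (B i k):] else char_matrix B i j)"
proof -
  have "charpoly_on I B = det_on I (\<lambda>i j. if j = k
      then (if i = k then [:0, 1:] else 0) + [:- complex_of_real (B i k):] else char_matrix B i j)"
    unfolding charpoly_on_char_matrix by (rule det_on_cong) (auto simp: char_matrix_def)
  then show ?thesis
    unfolding det_on_add_column[OF assms] det_on_unit_column[OF assms] charpoly_on_char_matrix .
qed

lemma charpoly_on_monic:
  assumes "finite I"
  shows "degree (charpoly_on I B) = card I \<and> lead_coeff (charpoly_on I B) = 1"
  using assms
proof (induction I rule: finite_induct)
  case empty
  then show ?case
    unfolding charpoly_on_char_matrix by simp
next
  case (insert k F)
  let ?q = "charpoly_on F B"
  let ?G = "det_on (insert k F)
    (\<lambda>i j. if j = k then [:- complex_of_real (B i k):] else char_matrix B i j)"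
  have split: "charpoly_on (insert k F) B = pCons 0 ?q + ?G"
    using charpoly_on_split_column[of "insert k F" k B] insert.hyps by simp
  have "degree ?G \<le> card F"
    using degree_det_on_replace_column[of "insert k F" k _ "char_matrix B", OF _ _ _ degree_char_matrix]
      insert.hyps by simp
  moreover have "degree (pCons 0 ?q) = Suc (card F)" and "coeff ?q (card F) = 1"
    using insert.IH by auto
  ultimately show ?case
    using split insert.hyps coeff_eq_0[of ?G "Suc (card F)"] degree_add_eq_left[of ?G "pCons 0 ?q"]
    by simp
qed

lemma charpoly_on_nonzero: "finite I \<Longrightarrow> charpoly_on I B \<noteq> 0"
  using charpoly_on_monic by (metis leading_coeff_0_iff zero_neq_one)

lemma poly_charpoly_on_0:
  assumes "finite I"
  shows "poly (charpoly_on I B) 0 = complex_of_real ((-1) ^ card I * det_on I B)"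
proof -
  have "poly (charpoly_on I B) 0 = det_on I (\<lambda>i j. complex_of_real (B i j * (-1)))"
    unfolding charpoly_on_char_matrix poly_det_on by (rule det_on_cong) (simp add: char_matrix_def)
  then show ?thesis
    unfolding of_real_det_on[symmetric] det_on_scale_columns[OF assms] by simp
qed

section \<open>Roots in the closed right half-plane\<close>

lemma poly_bounded_by_higher_degree_poly:
  fixes p r :: "complex poly"
  assumes "closed S" and r: "\<And>z. z \<in> S \<Longrightarrow> poly r z \<noteq> 0" and "degree p < degree r"
  shows "\<exists>b\<ge>0. \<forall>z\<in>S. norm (poly p z) \<le> b * norm (poly r z)"
proof -
  let ?f = "\<lambda>z. norm (poly p z) / norm (poly r z)"
  have "((\<lambda>z. poly p z / poly r z) \<longlongrightarrow> 0) at_infinity"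
    using poly_divide_tendsto_0_at_infinity[OF assms(3)] .
  then have "eventually (\<lambda>z. norm (poly p z / poly r z) < 1) at_infinity"
    by (rule order_tendstoD(2)[OF tendsto_norm_zero]) simp
  then obtain R where far: "\<And>z. R \<le> norm z \<Longrightarrow> ?f z < 1"
    unfolding eventually_at_infinity by (auto simp: norm_divide)
  have "compact (S \<inter> cball 0 R)"
    using \<open>closed S\<close> by (simp add: closed_Int_compact)
  moreover have "continuous_on (S \<inter> cball 0 R) ?f"
    using r by (intro continuous_intros continuous_on_poly) auto
  ultimately have "bounded (?f ` (S \<inter> cball 0 R))"
    by (intro compact_imp_bounded compact_continuous_image)
  then obtain b0 where near: "\<And>z. z \<in> S \<inter> cball 0 R \<Longrightarrow> ?f z \<le> b0"
    unfolding bounded_pos by fastforce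
  have "?f z \<le> max 1 b0" if "z \<in> S" for z
    using that near[of z] far[of z] by (cases "norm z \<le> R") auto
  then have "\<forall>z\<in>S. norm (poly p z) \<le> max 1 b0 * norm (poly r z)"
    using r by (simp add: divide_le_eq)
  then show ?thesis
    by (intro exI[of _ "max 1 b0"]) auto
qed

text \<open>Near 0 a root would satisfy \<open>x = -e G(x)/q(x)\<close> with \<open>G/q\<close> close to the positive
  number c; away from 0 the term \<open>x q(x)\<close> dominates once e is small.\<close>
lemma right_half_plane_root_free_perturbation:
  fixes q G :: "complex poly"
  assumes q: "\<And>z. 0 \<le> Re z \<Longrightarrow> poly q z \<noteq> 0" and "degree G \<le> degree q"
    and G0: "poly G 0 = complex_of_real c * poly q 0" and "c > 0"
  shows "\<exists>e>0. \<forall>z. 0 \<le> Re z \<longrightarrow> poly ([:0, 1:] * q + smult (complex_of_real e) G) z \<noteq> 0"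
proof -
  define h where "h z = poly G z / poly q z" for z
  have "h 0 = complex_of_real c"
    unfolding h_def using G0 q[of 0] by simp
  moreover have "isCont h 0"
    unfolding h_def using q[of 0] by (intro continuous_intros) auto
  ultimately obtain \<delta> where "\<delta> > 0" and \<delta>: "\<And>z. norm z < \<delta> \<Longrightarrow> norm (h z - complex_of_real c) < c"
  proof -
    have "\<exists>\<delta>>0. \<forall>z. dist z 0 < \<delta> \<longrightarrow> dist (h z) (h 0) < c"
      using \<open>isCont h 0\<close> \<open>c > 0\<close> unfolding continuous_at_eps_delta by blast
    then show ?thesis
      using that \<open>h 0 = complex_of_real c\<close> by (auto simp: dist_norm)
  qed
  have near: "z * poly q z + complex_of_real e * poly G z \<noteq> 0"
    if "0 \<le> Re z" "norm z < \<delta>" "e > 0" for z e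
  proof
    assume root: "z * poly q z + complex_of_real e * poly G z = 0"
    have "0 < Re (h z)"
      using \<delta>[OF that(2)] abs_Re_le_cmod[of "h z - complex_of_real c"] by auto
    moreover have "z = - complex_of_real e * h z"
      using root q[OF that(1)] unfolding h_def by (simp add: field_simps add_eq_0_iff)
    then have "Re z = Re (- complex_of_real e * h z)"
      by (rule arg_cong)
    then have "Re z = - e * Re (h z)"
      by simp
    ultimately show False
      using that(1,3) mult_pos_pos[of e "Re (h z)"] by linarith
  qed
  have "closed {z. 0 \<le> Re z \<and> \<delta> \<le> norm z}"
    by (intro closed_Collect_conj closed_Collect_le continuous_intros)
  moreover have "poly ([:0, 1:] * q) z \<noteq> 0" if "z \<in> {z. 0 \<le> Re z \<and> \<delta> \<le> norm z}" for z
    using that q \<open>\<delta> > 0\<close> by auto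
  moreover have "degree G < degree ([:0, 1:] * q)"
    using \<open>degree G \<le> degree q\<close> q[of 0] by (cases "q = 0") (auto simp: degree_mult_eq)
  ultimately have "\<exists>b\<ge>0. \<forall>z \<in> {z. 0 \<le> Re z \<and> \<delta> \<le> norm z}.
      norm (poly G z) \<le> b * norm (poly ([:0, 1:] * q) z)"
    by (rule poly_bounded_by_higher_degree_poly)
  then obtain b where "b \<ge> 0"
    and b: "\<And>z. 0 \<le> Re z \<Longrightarrow> \<delta> \<le> norm z \<Longrightarrow> norm (poly G z) \<le> b * norm (z * poly q z)"
    by auto
  define e where "e = 1 / (b + 1)"
  have "e > 0"
    unfolding e_def using \<open>b \<ge> 0\<close> by simp
  have "z * poly q z + complex_of_real e * poly G z \<noteq> 0" if "0 \<le> Re z" for z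
  proof (cases "norm z < \<delta>")
    case True
    then show ?thesis
      using near that \<open>e > 0\<close> by simp
  next
    case False
    then have "z * poly q z \<noteq> 0"
      using \<open>\<delta> > 0\<close> q[OF that] by auto
    have "norm (complex_of_real e * poly G z) \<le> e * b * norm (z * poly q z)"
      using b[OF that] False \<open>e > 0\<close> by (simp add: norm_mult mult.assoc)
    also have "\<dots> < norm (z * poly q z)"
      using \<open>z * poly q z \<noteq> 0\<close> \<open>b \<ge> 0\<close> unfolding e_def by (simp add: field_simps)
    finally show ?thesis
      by (metis add_eq_0_iff norm_minus_cancel order_less_irrefl)
  qed
  then show ?thesis
    using \<open>e > 0\<close> by auto
qed

section \<open>Diagonal stabilization\<close>

definition hurwitz_stable_on :: "'m set \<Rightarrow> ('m \<Rightarrow> 'm \<Rightarrow> real) \<Rightarrow> bool" where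
  "hurwitz_stable_on I A \<longleftrightarrow> (\<forall>z\<in>eigenvalues_on I A. Re z < 0)"

lemma charpoly_on_insert_rescale_column:
  fixes A :: "'m \<Rightarrow> 'm \<Rightarrow> real"
  assumes "finite F" and "k \<notin> F"
  shows "charpoly_on (insert k F) (\<lambda>a b. A a b * (d(k := e)) b) =
    [:0, 1:] * charpoly_on F (\<lambda>a b. A a b * d b) + smult (complex_of_real e)
      (det_on (insert k F) (\<lambda>a b. if b = k then [:- complex_of_real (A a k):]
        else char_matrix (\<lambda>a b. A a b * d b) a b))"
proof -
  have fin: "finite (insert k F)" and k: "k \<in> insert k F"
    using assms(1) by auto
  have "charpoly_on F (\<lambda>a b. A a b * (d(k := e)) b) = charpoly_on F (\<lambda>a b. A a b * d b)"
    unfolding charpoly_on_char_matrix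
    by (rule det_on_cong) (use assms(2) in \<open>auto simp: char_matrix_def\<close>)
  moreover have "det_on (insert k F)
      (\<lambda>a b. if b = k then [:- complex_of_real (A a k * (d(k := e)) k):]
      else char_matrix (\<lambda>a b. A a b * (d(k := e)) b) a b) =
    det_on (insert k F) (\<lambda>a b. if b = k then [:complex_of_real e:] * [:- complex_of_real (A a k):]
      else char_matrix (\<lambda>a b. A a b * d b) a b)"
    by (rule det_on_cong) (auto simp: char_matrix_def)
  ultimately show ?thesis
    using charpoly_on_split_column[OF fin k, of "\<lambda>a b. A a b * (d(k := e)) b"] assms(2)
    by (simp add: det_on_scale_column[OF fin k])
qed

text \<open>The alternating signs of the two determinants make \<open>G(0)/q(0)\<close> positive, so the
  perturbation lemma applies to the splitting \<open>x q(x) + e G(x)\<close> of the new characteristic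
  polynomial.\<close>
lemma hurwitz_stable_on_insert:
  fixes A :: "'m \<Rightarrow> 'm \<Rightarrow> real"
  assumes "finite F" and "k \<notin> F" and d: "\<forall>j. 0 < d j"
    and stable: "hurwitz_stable_on F (\<lambda>a b. A a b * d b)"
    and sign_F: "0 < (-1) ^ card F * det_on F A"
    and sign_kF: "0 < (-1) ^ card (insert k F) * det_on (insert k F) A"
  shows "\<exists>e>0. hurwitz_stable_on (insert k F) (\<lambda>a b. A a b * (d(k := e)) b)"
proof -
  let ?I = "insert k F"
  define q where "q = charpoly_on F (\<lambda>a b. A a b * d b)"
  define G where "G = det_on ?I (\<lambda>a b. if b = k then [:- complex_of_real (A a k):]
    else char_matrix (\<lambda>a b. A a b * d b) a b)"
  have split: "charpoly_on ?I (\<lambda>a b. A a b * (d(k := e)) b) =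
      [:0, 1:] * q + smult (complex_of_real e) G" for e
    unfolding q_def G_def using assms(1,2) by (rule charpoly_on_insert_rescale_column)
  have q_roots: "poly q z \<noteq> 0" if "0 \<le> Re z" for z
    using stable that unfolding hurwitz_stable_on_def eigenvalues_on_def q_def by force
  have "degree G \<le> card ?I - 1"
    unfolding G_def
    by (rule degree_det_on_replace_column[OF _ _ _ degree_char_matrix]) (use assms(1) in auto)
  then have deg: "degree G \<le> degree q"
    unfolding q_def using charpoly_on_monic[OF assms(1)] assms(1,2) by simp
  define a where "a = (-1) ^ card ?I * (prod (d(k := 1)) ?I * det_on ?I A)"
  define b where "b = (-1) ^ card F * (prod d F * det_on F A)"
  \<comment> \<open>\<open>G(0)\<close> is the constant term of the splitting at \<open>e = 1\<close>.\<close>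
  have "poly G 0 = poly (charpoly_on ?I (\<lambda>i j. A i j * (d(k := 1)) j)) 0"
    unfolding split by simp
  then have G0: "poly G 0 = complex_of_real a"
    unfolding a_def poly_charpoly_on_0[OF finite_insert[THEN iffD2, OF assms(1)]]
    by (simp add: det_on_scale_columns assms(1))
  have q0: "poly q 0 = complex_of_real b"
    unfolding q_def b_def poly_charpoly_on_0[OF assms(1)] det_on_scale_columns[OF assms(1)] ..
  have "0 < prod (d(k := 1)) ?I" and "0 < prod d F"
    using d by (auto intro: prod_pos)
  then have "0 < a" and "0 < b"
    unfolding a_def b_def using sign_F sign_kF
    by (simp_all add: mult.left_commute[of "(-1) ^ _"])
  then have "poly G 0 = complex_of_real (a / b) * poly q 0"
    unfolding G0 q0 of_real_mult[symmetric] by simp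
  moreover have "0 < a / b"
    using \<open>0 < a\<close> \<open>0 < b\<close> by simp
  ultimately have
    "\<exists>e>0. \<forall>z. 0 \<le> Re z \<longrightarrow> poly ([:0, 1:] * q + smult (complex_of_real e) G) z \<noteq> 0"
    using right_half_plane_root_free_perturbation[of q G "a / b"] q_roots deg by blast
  then obtain e where "e > 0"
    and e: "\<And>z. 0 \<le> Re z \<Longrightarrow> poly ([:0, 1:] * q + smult (complex_of_real e) G) z \<noteq> 0"
    by blast
  have "hurwitz_stable_on ?I (\<lambda>a b. A a b * (d(k := e)) b)"
    unfolding hurwitz_stable_on_def eigenvalues_on_def split
    using e by (meson mem_Collect_eq not_less)
  then show ?thesis
    using \<open>e > 0\<close> by blast
qed

lemma hurwitz_stable_on_empty: "hurwitz_stable_on {} A"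
  unfolding hurwitz_stable_on_def eigenvalues_on_def charpoly_on_char_matrix by simp

lemma D_stabilizable_along_chain:
  fixes A :: "'m \<Rightarrow> 'm \<Rightarrow> real" and F :: "nat \<Rightarrow> 'm set"
  assumes chain:
      "\<And>i. i \<le> n \<Longrightarrow> finite (F i) \<and> card (F i) = i \<and> 0 < (-1) ^ i * det_on (F i) A"
    and nested: "\<And>i. i < n \<Longrightarrow> F i \<subseteq> F (Suc i)"
  shows "\<exists>d. (\<forall>j. 0 < d j) \<and> hurwitz_stable_on (F n) (\<lambda>a b. A a b * d b)"
  using assms
proof (induction n)
  case 0
  then have "F 0 = {}"
    by auto
  then show ?case
    by (auto intro: exI[of _ "\<lambda>_. 1"] simp: hurwitz_stable_on_empty)
next
  case (Suc n)
  have "\<exists>d. (\<forall>j. 0 < d j) \<and> hurwitz_stable_on (F n) (\<lambda>a b. A a b * d b)"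
    by (rule Suc.IH) (use Suc.prems in auto)
  then obtain d where d: "\<forall>j. 0 < d j" and stable: "hurwitz_stable_on (F n) (\<lambda>a b. A a b * d b)"
    by blast
  have fin: "finite (F n)" and sub: "F n \<subseteq> F (Suc n)"
    using Suc.prems by auto
  have "card (F (Suc n) - F n) = 1"
    using card_Diff_subset[OF fin sub] Suc.prems(1)[of n] Suc.prems(1)[of "Suc n"] by simp
  then obtain k where "F (Suc n) - F n = {k}"
    by (rule card_1_singletonE)
  then have "k \<notin> F n" and F_Suc: "F (Suc n) = insert k (F n)"
    using sub by auto
  have "0 < (-1) ^ card (F n) * det_on (F n) A"
    using Suc.prems(1)[of n] by simp
  moreover have "0 < (-1) ^ card (insert k (F n)) * det_on (insert k (F n)) A"
    using Suc.prems(1)[of "Suc n"] unfolding F_Suc by simp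
  ultimately obtain e where "e > 0"
    and "hurwitz_stable_on (F (Suc n)) (\<lambda>a b. A a b * (d(k := e)) b)"
    using hurwitz_stable_on_insert[OF fin \<open>k \<notin> F n\<close> d stable] unfolding F_Suc by blast
  then show ?case
    using d by (intro exI[of _ "d(k := e)"]) auto
qed

lemma sgn_eq_power_imp_pos:
  fixes x :: real
  assumes "sgn x = (-1) ^ m"
  shows "0 < (-1) ^ m * x"
proof -
  have "x \<noteq> 0"
    using assms by (metis sgn_0 power_eq_0_iff zero_neq_neg_one)
  have "(-1) ^ m * x = \<bar>x\<bar>"
    unfolding assms[symmetric] abs_sgn[of x] by (rule mult.commute)
  then show ?thesis
    using \<open>x \<noteq> 0\<close> by simp
qed

lemma PFF_minus_on_D_stabilizable:
  fixes A :: "'m \<Rightarrow> 'm \<Rightarrow> real"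
  assumes "finite K" and "PFF_minus_on K A"
  shows "\<exists>d. (\<forall>j. 0 < d j) \<and> hurwitz_stable_on K (\<lambda>a b. A a b * d b)"
proof -
  obtain f :: "nat \<Rightarrow> 'm set" where P0: "P0_minus_on K A"
    and f: "\<forall>i\<in>{1..card K}. f i \<subseteq> K \<and> card (f i) = i \<and> det_on (f i) A \<noteq> 0"
    and f_nested: "\<forall>i\<in>{1..<card K}. f i \<subset> f (Suc i)"
    using assms(2) unfolding PFF_minus_on_def by (elim conjE exE)
  define F where "F i = (if i = 0 then {} else f i)" for i
  have chain: "finite (F i) \<and> card (F i) = i \<and> 0 < (-1) ^ i * det_on (F i) A"
    if "i \<le> card K" for i
  proof (cases "i = 0")
    case False
    with that have "F i = f i" and "i \<in> {1..card K}"
      unfolding F_def by auto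
    with f have "F i \<subseteq> K" and card: "card (F i) = i" and "det_on (F i) A \<noteq> 0"
      by auto
    with P0 have "sgn (det_on (F i) A) = (-1) ^ card (F i)"
      unfolding P0_minus_on_def by blast
    then have "0 < (-1) ^ i * det_on (F i) A"
      unfolding card by (rule sgn_eq_power_imp_pos)
    with \<open>F i \<subseteq> K\<close> card show ?thesis
      using finite_subset[OF _ assms(1)] by blast
  qed (simp add: F_def)
  have nested: "F i \<subseteq> F (Suc i)" if "i < card K" for i
    using f_nested that unfolding F_def by auto
  have "F (card K) = K"
  proof (cases "card K = 0")
    case True
    then show ?thesis
      using assms(1) unfolding F_def by simp
  next
    case False
    then have "F (card K) \<subseteq> K" and "card (F (card K)) = card K"
      using f unfolding F_def by auto
    then show ?thesis
      using card_subset_eq[OF assms(1)] by blast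
  qed
  with D_stabilizable_along_chain[of "card K" F A, OF chain nested] show ?thesis
    by simp
qed

lemma inertia_on_unstable_neq_stable:
  assumes "finite I" and "hurwitz_unstable_on I A" and "hurwitz_stable_on I B"
  shows "inertia_on I A \<noteq> inertia_on I B"
proof -
  let ?P = "charpoly_on I A"
  obtain z0 where z0: "z0 \<in> eigenvalues_on I A" "0 < Re z0"
    using assms(2) unfolding hurwitz_unstable_on_def by blast
  have "?P \<noteq> 0"
    using charpoly_on_nonzero[OF assms(1)] .
  then have "finite {z \<in> eigenvalues_on I A. 0 < Re z}"
    unfolding eigenvalues_on_def using poly_roots_finite[of ?P] by simp
  moreover have "0 < order z0 ?P"
    using z0(1) \<open>?P \<noteq> 0\<close> unfolding eigenvalues_on_def by (simp add: order_root)
  moreover have "order z0 ?P \<le> (\<Sum>z\<in>{z \<in> eigenvalues_on I A. 0 < Re z}. order z ?P)"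
    by (rule member_le_sum) (use z0 calculation in auto)
  ultimately have "0 < fst (snd (inertia_on I A))"
    unfolding inertia_on_def by simp
  moreover have "{z \<in> eigenvalues_on I B. 0 < Re z} = {}"
    using assms(3) unfolding hurwitz_stable_on_def by force
  then have "fst (snd (inertia_on I B)) = 0"
    unfolding inertia_on_def fst_conv snd_conv by (simp only: sum.empty)
  ultimately show ?thesis
    by auto
qed

theorem mainTheorem14:
  fixes s p :: "'j::finite \<Rightarrow> 'm::finite \<Rightarrow> real"
    and S :: "'m \<Rightarrow> 'j \<Rightarrow> real"
    and K :: "'m set" and E :: "'j set" and J :: "'m \<Rightarrow> 'j"
  assumes "reaction_network s p S"
    and "child_selection s K E J"
    and "unstable_negative_feedback_on K (cs_matrix S J)"
    and "PFF_minus_on K (cs_matrix S J)"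
  shows "D_Hopf_on K (cs_matrix S J)"
proof -
  let ?A = "cs_matrix S J"
  have unstable: "hurwitz_unstable_on K ?A" and sign: "sgn (det_on K ?A) = (-1) ^ card K"
    using assms(3) unfolding unstable_negative_feedback_on_def unstable_core_on_def by auto
  have "det_on K ?A \<noteq> 0"
    using sgn_eq_power_imp_pos[OF sign] by auto
  obtain d where "\<forall>j. 0 < d j" and stable: "hurwitz_stable_on K (\<lambda>a b. ?A a b * d b)"
    using PFF_minus_on_D_stabilizable[OF finite assms(4)] by blast
  have "inertia_on K (\<lambda>a b. ?A a b * 1) \<noteq> inertia_on K (\<lambda>a b. ?A a b * d b)"
    using inertia_on_unstable_neq_stable[OF finite unstable stable] by simp
  then show ?thesis
    unfolding D_Hopf_on_def using \<open>det_on K ?A \<noteq> 0\<close> \<open>\<forall>j. 0 < d j\<close>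
    by (intro exI[of _ K] conjI exI[of _ "\<lambda>_. 1"] exI[of _ d]) auto
qed

end
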